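(* Let $G$ be a simple graph and let $k \geq 1$ be an integer. Then $G$ has a non-empty $k$-core if and only if $\rho_k(G) \geq 1$.
   Context: All graphs are finite, simple and undirected. The $k$-core of a graph $G$ is the maximal subgraph of $G$ in which every vertex has degree at least $k$ within the subgraph (it may be empty; "$G$ has a $k$-core" means it is non-empty, i.e. $G$ has a subgraph of minimum degree at least $k$). For a tensor $\mathcal{A}=(a_{i_1 i_2\cdots i_m})$ of order $m$ and dimension $n$ and $\mathbf{x}\in\mathbb{C}^n$, $\mathcal{A}\mathbf{x}^{m-1}\in\mathbb{C}^n$ has $i$-th component $\sum_{i_2,\ldots,i_m=1}^n a_{i i_2\cdots i_m}x_{i_2}\cdots x_{i_m}$. A complex number $\lambda$ is an eigenvalue of $\mathcal{A}$ if there is a nonzero $\mathbf{x}\in\mathbb{C}^n$ with $\mathcal{A}\mathbf{x}^{m-1}=\lambda\mathbf{x}^{[m-1]}$, where $\mathbf{x}^{[m-1]}=(x_1^{m-1},\ldots,x_n^{m-1})^{\mathrm T}$; $\mathbf{x}$ is then an eigenvector. The spectral radius $\rho(\mathcal{A})$ is the largest modulus of the eigenvalues of $\mathcal{A}$. For a graph $G$ on vertex set $\{1,\ldots,n\}$ with neighborhoods $N_G(i)$, the $k$-adjacency tensor $\mathcal{A}^{(k)}(G)=(a_{i_1 i_2\cdots i_{k+1}})$ is the order-$(k+1)$, dimension-$n$ tensor with $a_{i_1 i_2\cdots i_{k+1}}=1/k!$ if $i_1,\ldots,i_{k+1}$ are pairwise distinct and $\{i_2,\ldots,i_{k+1}\}\subseteq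 N_G(i_1)$, and $0$ otherwise. Equivalently, $(\mathcal{A}^{(k)}(G)\mathbf{x}^k)_i=\sum_{T\subseteq N_G(i),\,|T|=k}\prod_{j\in T}x_j$. Define $\rho_k(G)=\rho(\mathcal{A}^{(k)}(G))$. (For $k=1$ this is the adjacency matrix and its spectral radius.) *)

theory Defs
  imports Complex_Main
begin

definition simple_graph :: "('v::finite \<Rightarrow> 'v \<Rightarrow> bool) \<Rightarrow> bool" where
  "simple_graph E \<longleftrightarrow> (\<forall>u v. E u v \<longleftrightarrow> E v u) \<and> (\<forall>v. \<not> E v v)"

definition nbhd :: "('v \<Rightarrow> 'v \<Rightarrow> bool) \<Rightarrow> 'v \<Rightarrow> 'v set" where
  "nbhd E i = {j. E i j}"

definition has_k_core :: "('v::finite \<Rightarrow> 'v \<Rightarrow> bool) \<Rightarrow> nat \<Rightarrow> bool" where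
  "has_k_core E k \<longleftrightarrow> (\<exists>S. S \<noteq> {} \<and> (\<forall>v\<in>S. card {u\<in>S. E v u} \<ge> k))"

text \<open>A tensor of order m and dimension n = CARD('v): entry a_{i i_2 ... i_m} is
  A i [i_2, ..., i_m].\<close>
type_synonym 'v tensor = "'v \<Rightarrow> 'v list \<Rightarrow> complex"

definition tensor_apply :: "'v::finite tensor \<Rightarrow> nat \<Rightarrow> ('v \<Rightarrow> complex) \<Rightarrow> 'v \<Rightarrow> complex" where
  "tensor_apply A m x i =
     (\<Sum>is\<in>{is. length is = m - 1}. A i is * (\<Prod>j\<leftarrow>is. x j))"

definition tensor_eigenvalue :: "'v::finite tensor \<Rightarrow> nat \<Rightarrow> complex \<Rightarrow> bool" where
  "tensor_eigenvalue A m mu \<longleftrightarrow>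
     (\<exists>x. x \<noteq> (\<lambda>_. 0) \<and> (\<forall>i. tensor_apply A m x i = mu * x i ^ (m - 1)))"

definition tensor_spectral_radius :: "'v::finite tensor \<Rightarrow> nat \<Rightarrow> real" where
  "tensor_spectral_radius A m = Sup {cmod mu | mu. tensor_eigenvalue A m mu}"

definition k_adj_tensor :: "('v::finite \<Rightarrow> 'v \<Rightarrow> bool) \<Rightarrow> nat \<Rightarrow> 'v tensor" where
  "k_adj_tensor E k i is =
     (if distinct (i # is) \<and> set is \<subseteq> nbhd E i then 1 / of_nat (fact k) else 0)"

definition rho_k :: "('v::finite \<Rightarrow> 'v \<Rightarrow> bool) \<Rightarrow> nat \<Rightarrow> real" where
  "rho_k E k = tensor_spectral_radius (k_adj_tensor E k) (k + 1)"

end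

theory Submission
  imports Defs "HOL-Analysis.Analysis" "HOL-Combinatorics.Multiset_Permutations"
begin

(* If G has no k-core, every nonzero x has a support vertex with fewer than k neighbours in
   the support; there (A x^k) vanishes, so every eigenvalue is 0.
   Conversely, on a k-core S the map T x = (A x^k)^[1/k] is continuous, monotone and
   1-homogeneous on the nonnegative orthant, and the indicator u of S satisfies u <= T u.
   Brouwer's theorem gives x in the simplex with T x + eps u = mu x, the Collatz-Wielandt
   comparison of x with its largest multiple of u below it forces mu > 1, and compactness of
   the simplex lets eps tend to 0: T x = s x with s >= 1, so s^k >= 1 is an eigenvalue of A. *)

definition coord_sum :: "real^'n \<Rightarrow> real" where
  "coord_sum v = (\<Sum>i\<in>UNIV. v $ i)"

lemma coord_sum_add [simp]: "coord_sum (v + w) = coord_sum v + coord_sum w"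
  by (simp add: coord_sum_def sum.distrib)

lemma coord_sum_scaleR [simp]: "coord_sum (c *\<^sub>R v) = c * coord_sum v"
  by (simp add: coord_sum_def sum_distrib_left)

lemma coord_sum_nonneg: "0 \<le> v \<Longrightarrow> 0 \<le> coord_sum v"
  unfolding coord_sum_def less_eq_vec_def by (intro sum_nonneg) auto

lemma coord_sum_pos:
  assumes "0 \<le> v" "v \<noteq> 0"
  shows "0 < coord_sum v"
proof -
  obtain i where "v $ i \<noteq> 0"
    using assms(2) by (auto simp: vec_eq_iff)
  with assms(1) show ?thesis
    unfolding coord_sum_def less_eq_vec_def by (intro sum_pos2[of UNIV i]) (auto simp: less_le)
qed

lemma continuous_on_coord_sum [continuous_intros]:
  "continuous_on S f \<Longrightarrow> continuous_on S (\<lambda>x. coord_sum (f x))"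
  unfolding coord_sum_def by (intro continuous_intros)

definition unit_simplex :: "(real^'n) set" where
  "unit_simplex = {x. 0 \<le> x \<and> coord_sum x = 1}"

lemma norm_le_1_if_unit_simplex: "x \<in> unit_simplex \<Longrightarrow> norm x \<le> 1"
  using norm_le_l1_cart[of x] by (simp add: unit_simplex_def coord_sum_def less_eq_vec_def)

lemma compact_unit_simplex: "compact unit_simplex"
proof -
  have "closed ({x::real^'n. \<forall>i. 0 \<le> x $ i} \<inter> {x. coord_sum x = 1})"
    by (intro closed_Int closed_positive_orthant closed_Collect_eq continuous_intros)
  then have "closed (unit_simplex :: (real^'n) set)"
    by (simp add: unit_simplex_def less_eq_vec_def Collect_conj_eq)
  moreover have "bounded (unit_simplex :: (real^'n) set)"
    using norm_le_1_if_unit_simplex by (auto simp: bounded_iff)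
  ultimately show ?thesis
    by (simp add: compact_eq_bounded_closed)
qed

lemma convex_unit_simplex: "convex unit_simplex"
  unfolding convex_def unit_simplex_def
  by (auto simp: less_eq_vec_def)

lemma unit_simplex_nonempty: "(\<chi> i. 1 / CARD('n)) \<in> (unit_simplex :: (real^'n) set)"
  by (simp add: unit_simplex_def coord_sum_def less_eq_vec_def)

lemma unit_simplex_nonneg: "x \<in> unit_simplex \<Longrightarrow> 0 \<le> x"
  by (simp add: unit_simplex_def)

lemma perturbed_eigenvector:
  fixes T :: "real^'n \<Rightarrow> real^'n"
  assumes cont: "continuous_on {x. 0 \<le> x} T" and nonneg: "\<And>x. 0 \<le> x \<Longrightarrow> 0 \<le> T x"
    and u: "0 \<le> u" "u \<noteq> 0" and "0 < \<epsilon>"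
  obtains x \<mu> where "x \<in> unit_simplex" "T x + \<epsilon> *\<^sub>R u = \<mu> *\<^sub>R x"
proof -
  define F where "F x = T x + \<epsilon> *\<^sub>R u" for x
  define \<Phi> where "\<Phi> x = (1 / coord_sum (F x)) *\<^sub>R F x" for x
  have "0 < coord_sum u"
    using u by (rule coord_sum_pos)
  have F_pos: "0 < coord_sum (F x)" and F_nonneg: "0 \<le> F x" if "x \<in> unit_simplex" for x
    using nonneg[OF unit_simplex_nonneg[OF that]] u(1) \<open>0 < \<epsilon>\<close> \<open>0 < coord_sum u\<close>
    by (auto simp: F_def less_eq_vec_def intro!: add_nonneg_pos coord_sum_nonneg)
  have "continuous_on unit_simplex F"
    unfolding F_def
    by (intro continuous_intros continuous_on_subset[OF cont]) (auto simp: unit_simplex_def)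
  moreover have "coord_sum (F x) \<noteq> 0" if "x \<in> unit_simplex" for x
    using F_pos[OF that] by simp
  ultimately have "continuous_on unit_simplex \<Phi>"
    unfolding \<Phi>_def by (intro continuous_intros) auto
  moreover have "\<Phi> x \<in> unit_simplex" if "x \<in> unit_simplex" for x
    using F_pos[OF that] F_nonneg[OF that]
    by (simp add: \<Phi>_def unit_simplex_def less_eq_vec_def)
  ultimately obtain x where x: "x \<in> unit_simplex" "\<Phi> x = x"
    using brouwer[OF compact_unit_simplex convex_unit_simplex _ _ Pi_I] unit_simplex_nonempty
    by blast
  then have "F x = coord_sum (F x) *\<^sub>R x"
    using F_pos[OF x(1)] by (auto simp: \<Phi>_def vec_eq_iff field_simps)
  then show ?thesis
    using that[OF x(1)] unfolding F_def by blast
qed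

lemma largest_multiple_below:
  fixes u x :: "real^'n"
  assumes u: "0 \<le> u" "u \<noteq> 0" and x: "0 \<le> x" and pos: "\<And>i. 0 < u $ i \<Longrightarrow> 0 < x $ i"
  obtains t j where "0 < t" "0 < u $ j" "x $ j = t * u $ j" "t *\<^sub>R u \<le> x"
proof -
  define U where "U = {i. 0 < u $ i}"
  obtain i where "u $ i \<noteq> 0"
    using u(2) by (auto simp: vec_eq_iff)
  then have "U \<noteq> {}"
    using u(1) by (auto simp: U_def less_eq_vec_def less_le)
  define t where "t = Min ((\<lambda>i. x $ i / u $ i) ` U)"
  have "t \<in> (\<lambda>i. x $ i / u $ i) ` U"
    unfolding t_def using \<open>U \<noteq> {}\<close> by (intro Min_in) auto
  then obtain j where j: "j \<in> U" "t = x $ j / u $ j"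
    by blast
  have "t * u $ i \<le> x $ i" for i
  proof (cases "i \<in> U")
    case True
    then have "t \<le> x $ i / u $ i"
      unfolding t_def by (intro Min_le) auto
    with True show ?thesis
      by (simp add: U_def pos_le_divide_eq)
  next
    case False
    moreover have "0 \<le> u $ i"
      using u(1) by (simp add: less_eq_vec_def)
    ultimately have "u $ i = 0"
      by (auto simp: U_def not_less)
    then show ?thesis
      using x by (simp add: less_eq_vec_def)
  qed
  moreover have "0 < t"
    using j pos[of j] by (simp add: U_def)
  ultimately show ?thesis
    using that j by (simp add: U_def less_eq_vec_def)
qed

lemma perturbed_eigenvalue_gt_1:
  fixes T :: "real^'n \<Rightarrow> real^'n"
  assumes nonneg: "\<And>x. 0 \<le> x \<Longrightarrow> 0 \<le> T x"
    and mono: "\<And>x y. 0 \<le> x \<Longrightarrow> x \<le> y \<Longrightarrow> T x \<le> T y"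
    and homogeneous: "\<And>c x. 0 \<le> c \<Longrightarrow> 0 \<le> x \<Longrightarrow> T (c *\<^sub>R x) = c *\<^sub>R T x"
    and u: "0 \<le> u" "u \<noteq> 0" "u \<le> T u"
    and x: "0 \<le> x" and "0 < \<epsilon>" and eq: "T x + \<epsilon> *\<^sub>R u = \<mu> *\<^sub>R x"
  shows "1 < \<mu>"
proof -
  have eq_at: "\<mu> * x $ i = T x $ i + \<epsilon> * u $ i" for i
    using arg_cong[OF eq, of "\<lambda>v. v $ i"] by simp
  have "0 < x $ i" if "0 < u $ i" for i
  proof -
    have "0 < \<mu> * x $ i"
      unfolding eq_at using nonneg[OF x] \<open>0 < \<epsilon>\<close> that
      by (intro add_nonneg_pos) (auto simp: less_eq_vec_def)
    moreover have "0 \<le> x $ i"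
      using x by (simp add: less_eq_vec_def)
    ultimately show ?thesis
      by (simp add: zero_less_mult_iff)
  qed
  then obtain t j where "0 < t" "0 < u $ j" and xj: "x $ j = t * u $ j" and "t *\<^sub>R u \<le> x"
    using largest_multiple_below[OF u(1,2) x] by blast
  have "t *\<^sub>R u \<le> t *\<^sub>R T u"
    using u(3) \<open>0 < t\<close> by (simp add: scaleR_left_mono)
  also have "\<dots> = T (t *\<^sub>R u)"
    using homogeneous[OF _ u(1), of t] \<open>0 < t\<close> by simp
  also have "\<dots> \<le> T x"
    using \<open>0 < t\<close> u(1) by (intro mono \<open>t *\<^sub>R u \<le> x\<close> scaleR_nonneg_nonneg) auto
  finally have "x $ j \<le> T x $ j"
    by (simp add: less_eq_vec_def xj)
  also have "\<dots> < \<mu> * x $ j"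
    unfolding eq_at using \<open>0 < \<epsilon>\<close> \<open>0 < u $ j\<close> by simp
  finally show ?thesis
    using \<open>0 < t\<close> \<open>0 < u $ j\<close> xj by simp
qed

lemma perturbed_eigenvector_residual:
  fixes x y u :: "real^'n"
  assumes x: "x \<in> unit_simplex" and "0 \<le> u" "0 \<le> \<epsilon>" "1 < \<mu>" and eq: "y + \<epsilon> *\<^sub>R u = \<mu> *\<^sub>R x"
  shows "norm (y - coord_sum y *\<^sub>R x) + max 0 (1 - coord_sum y)
           \<le> \<epsilon> * (2 * coord_sum u + norm u)"
proof -
  have "0 \<le> coord_sum u"
    using \<open>0 \<le> u\<close> by (rule coord_sum_nonneg)
  have sum_y: "coord_sum y = \<mu> - \<epsilon> * coord_sum u"
    using arg_cong[OF eq, of coord_sum] x by (simp add: unit_simplex_def)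
  have y: "y = \<mu> *\<^sub>R x - \<epsilon> *\<^sub>R u"
    using eq by (simp add: eq_diff_eq)
  have "norm (y - coord_sum y *\<^sub>R x) = norm (\<epsilon> *\<^sub>R (coord_sum u *\<^sub>R x - u))"
    by (subst sum_y, subst y) (simp add: algebra_simps)
  also have "\<dots> \<le> \<epsilon> * (coord_sum u * norm x + norm u)"
    using \<open>0 \<le> \<epsilon>\<close> \<open>0 \<le> coord_sum u\<close> norm_triangle_ineq4[of "coord_sum u *\<^sub>R x" u]
    by (simp add: mult_left_mono)
  also have "\<dots> \<le> \<epsilon> * (coord_sum u + norm u)"
    using \<open>0 \<le> \<epsilon>\<close> \<open>0 \<le> coord_sum u\<close> norm_le_1_if_unit_simplex[OF x]
    by (simp add: mult_left_mono mult_left_le)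
  moreover have "max 0 (1 - coord_sum y) \<le> \<epsilon> * coord_sum u"
    using sum_y \<open>1 < \<mu>\<close> \<open>0 \<le> \<epsilon>\<close> \<open>0 \<le> coord_sum u\<close> by simp
  moreover have "\<epsilon> * (2 * coord_sum u + norm u) = \<epsilon> * (coord_sum u + norm u) + \<epsilon> * coord_sum u"
    by (simp add: algebra_simps)
  ultimately show ?thesis
    by linarith
qed

lemma nonneg_eigenvector_of_subinvariant:
  fixes T :: "real^'n \<Rightarrow> real^'n"
  assumes cont: "continuous_on {x. 0 \<le> x} T"
    and nonneg: "\<And>x. 0 \<le> x \<Longrightarrow> 0 \<le> T x"
    and mono: "\<And>x y. 0 \<le> x \<Longrightarrow> x \<le> y \<Longrightarrow> T x \<le> T y"
    and homogeneous: "\<And>c x. 0 \<le> c \<Longrightarrow> 0 \<le> x \<Longrightarrow> T (c *\<^sub>R x) = c *\<^sub>R T x"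
    and u: "0 \<le> u" "u \<noteq> 0" "u \<le> T u"
  obtains x s where "0 \<le> x" "x \<noteq> 0" "1 \<le> s" "T x = s *\<^sub>R x"
proof -
  \<comment> \<open>The zeros of h in the simplex are the eigenvectors with eigenvalue at least 1;
    minimising h replaces the limit \<open>\<epsilon> \<rightarrow> 0\<close> of the perturbed eigenvectors.\<close>
  define h where "h x = norm (T x - coord_sum (T x) *\<^sub>R x) + max 0 (1 - coord_sum (T x))" for x
  define C where "C = 2 * coord_sum u + norm u"
  have "0 < C"
    using coord_sum_nonneg[OF u(1)] u(2) by (simp add: C_def add_nonneg_pos)
  have "continuous_on unit_simplex h"
    unfolding h_def
    by (intro continuous_intros continuous_on_subset[OF cont]) (auto simp: unit_simplex_def)
  then obtain x0 where x0: "x0 \<in> unit_simplex"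
    and x0_min: "\<And>y. y \<in> unit_simplex \<Longrightarrow> h x0 \<le> h y"
    using continuous_attains_inf[OF compact_unit_simplex] unit_simplex_nonempty by blast
  have h_small: "h x0 \<le> \<epsilon> * C" if "0 < \<epsilon>" for \<epsilon>
  proof -
    obtain x \<mu> where x: "x \<in> unit_simplex" and eq: "T x + \<epsilon> *\<^sub>R u = \<mu> *\<^sub>R x"
      using perturbed_eigenvector[OF cont nonneg u(1,2) \<open>0 < \<epsilon>\<close>] by blast
    have "1 < \<mu>"
      using perturbed_eigenvalue_gt_1[OF nonneg mono homogeneous u unit_simplex_nonneg[OF x]
          \<open>0 < \<epsilon>\<close> eq] .
    then have "h x \<le> \<epsilon> * C"
      unfolding h_def C_def using x u(1) \<open>0 < \<epsilon>\<close> eq by (intro perturbed_eigenvector_residual) auto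
    then show ?thesis
      using x0_min[OF x] by linarith
  qed
  have "h x0 \<le> 0"
  proof (rule field_le_epsilon)
    fix e :: real assume "0 < e"
    then show "h x0 \<le> 0 + e"
      using h_small[of "e / C"] \<open>0 < C\<close> by simp
  qed
  then have "T x0 = coord_sum (T x0) *\<^sub>R x0" and "1 \<le> coord_sum (T x0)"
    unfolding h_def by (smt (verit) norm_ge_zero norm_eq_zero eq_iff_diff_eq_0)+
  moreover have "x0 \<noteq> 0"
    using x0 by (auto simp: unit_simplex_def coord_sum_def)
  ultimately show ?thesis
    using that unit_simplex_nonneg[OF x0] by blast
qed

definition adj_form ::
    "('v::finite \<Rightarrow> 'v \<Rightarrow> bool) \<Rightarrow> nat \<Rightarrow> ('v \<Rightarrow> 'a::comm_semiring_1) \<Rightarrow> 'v \<Rightarrow> 'a"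
  where "adj_form E k x i = (\<Sum>T | T \<subseteq> nbhd E i \<and> card T = k. \<Prod>j\<in>T. x j)"

lemma sum_distinct_lists_by_set:
  fixes f :: "'a set \<Rightarrow> 'b::{comm_semiring_1,semiring_char_0}" and A :: "'a set"
  assumes "finite A"
  shows "(\<Sum>xs | length xs = k \<and> distinct xs \<and> set xs \<subseteq> A. f (set xs))
       = fact k * (\<Sum>T | T \<subseteq> A \<and> card T = k. f T)"
proof -
  let ?L = "{xs. length xs = k \<and> distinct xs \<and> set xs \<subseteq> A}"
  have fin: "finite ?L"
    using finite_lists_length_eq[OF assms, of k] by (rule rev_finite_subset) auto
  have set_L: "set ` ?L = {T. T \<subseteq> A \<and> card T = k}"
  proof (intro equalityI subsetI)
    fix T assume "T \<in> {T. T \<subseteq> A \<and> card T = k}"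
    moreover from this obtain xs where "set xs = T" "distinct xs"
      using finite_distinct_list[OF finite_subset[OF _ assms]] by blast
    ultimately show "T \<in> set ` ?L" by (auto simp: distinct_card)
  qed (auto simp: distinct_card)
  have "(\<Sum>xs\<in>?L. f (set xs)) = (\<Sum>T\<in>set ` ?L. \<Sum>xs | xs \<in> ?L \<and> set xs = T. f T)"
    by (subst sum.image_gen[OF fin, of _ set]) (intro sum.cong refl; auto)
  also have "\<dots> = (\<Sum>T | T \<subseteq> A \<and> card T = k. fact k * f T)"
  proof (rule sum.cong[OF set_L])
    fix T assume T: "T \<in> {T. T \<subseteq> A \<and> card T = k}"
    then have "{xs \<in> ?L. set xs = T} = permutations_of_set T"
      by (auto simp: permutations_of_set_def distinct_card)
    then show "(\<Sum>xs | xs \<in> ?L \<and> set xs = T. f T) = fact k * f T"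
      using T finite_subset[OF _ assms] by simp
  qed
  finally show ?thesis by (simp add: sum_distrib_left)
qed

lemma tensor_apply_k_adj_tensor:
  fixes E :: "'v::finite \<Rightarrow> 'v \<Rightarrow> bool"
  assumes "simple_graph E"
  shows "tensor_apply (k_adj_tensor E k) (Suc k) x i = adj_form E k x i"
proof -
  let ?L = "{is. length is = k \<and> distinct is \<and> set is \<subseteq> nbhd E i}"
  have "i \<notin> nbhd E i"
    using assms by (simp add: simple_graph_def nbhd_def)
  then have "tensor_apply (k_adj_tensor E k) (Suc k) x i
      = (\<Sum>is\<in>{is. length is = k}. if is \<in> ?L then (\<Prod>j\<in>set is. x j) / fact k else 0)"
    unfolding tensor_apply_def k_adj_tensor_def
    by (intro sum.cong refl) (auto simp: prod.distinct_set_conv_list)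
  also have "\<dots> = (\<Sum>is\<in>?L. (\<Prod>j\<in>set is. x j) / fact k)"
    using finite_lists_length_eq[of "UNIV::'v set" k]
    by (intro sum.mono_neutral_cong_right) auto
  also have "\<dots> = adj_form E k x i"
    by (simp add: sum_divide_distrib[symmetric] sum_distinct_lists_by_set adj_form_def)
  finally show ?thesis .
qed

lemma adj_form_of_real:
  "adj_form E k (\<lambda>j. of_real (x j) :: 'a::{real_algebra_1,comm_ring_1}) i = of_real (adj_form E k x i)"
  by (simp add: adj_form_def)

lemma adj_form_eq_0:
  fixes x :: "'v::finite \<Rightarrow> 'a::comm_semiring_1"
  assumes "card {u. x u \<noteq> 0 \<and> E i u} < k"
  shows "adj_form E k x i = 0"
  unfolding adj_form_def
proof (rule sum.neutral, intro ballI)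
  fix T assume T: "T \<in> {T. T \<subseteq> nbhd E i \<and> card T = k}"
  have "\<not> T \<subseteq> {u. x u \<noteq> 0 \<and> E i u}"
    using T assms card_mono[of "{u. x u \<noteq> 0 \<and> E i u}" T] by auto
  with T have "\<exists>j\<in>T. x j = 0"
    by (auto simp: nbhd_def)
  then show "(\<Prod>j\<in>T. x j) = 0"
    by (simp add: prod_zero)
qed

lemma adj_form_ge_1:
  fixes x :: "'v::finite \<Rightarrow> real"
  assumes "\<And>j. 0 \<le> x j" and "B \<subseteq> nbhd E i" "card B = k" and "\<And>j. j \<in> B \<Longrightarrow> 1 \<le> x j"
  shows "1 \<le> adj_form E k x i"
proof -
  have "1 \<le> (\<Prod>j\<in>B. x j)"
    using assms(4) by (rule prod_ge_1)
  also have "\<dots> \<le> adj_form E k x i"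
    unfolding adj_form_def using assms(1-3)
    by (intro member_le_sum) (auto intro: prod_nonneg)
  finally show ?thesis .
qed

lemma adj_form_nonneg:
  fixes x :: "'v::finite \<Rightarrow> real"
  shows "(\<And>j. 0 \<le> x j) \<Longrightarrow> 0 \<le> adj_form E k x i"
  unfolding adj_form_def by (intro sum_nonneg prod_nonneg) auto

lemma adj_form_mono:
  fixes x y :: "'v::finite \<Rightarrow> real"
  shows "(\<And>j. 0 \<le> x j) \<Longrightarrow> (\<And>j. x j \<le> y j) \<Longrightarrow> adj_form E k x i \<le> adj_form E k y i"
  unfolding adj_form_def by (intro sum_mono prod_mono) auto

lemma adj_form_scale:
  fixes x :: "'v::finite \<Rightarrow> 'a::comm_semiring_1"
  shows "adj_form E k (\<lambda>j. c * x j) i = c ^ k * adj_form E k x i"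
  unfolding adj_form_def by (simp add: prod.distrib sum_distrib_left)

definition adj_root_map :: "('v::finite \<Rightarrow> 'v \<Rightarrow> bool) \<Rightarrow> nat \<Rightarrow> real^'v \<Rightarrow> real^'v" where
  "adj_root_map E k x = (\<chi> i. root k (adj_form E k (($) x) i))"

lemma continuous_on_adj_root_map: "continuous_on S (adj_root_map E k)"
  unfolding adj_root_map_def adj_form_def
  by (intro continuous_intros continuous_on_vec_lambda)

lemma adj_root_map_nonneg: "0 \<le> x \<Longrightarrow> 0 \<le> adj_root_map E k x"
  unfolding adj_root_map_def less_eq_vec_def by (auto intro!: real_root_ge_zero adj_form_nonneg)

lemma adj_root_map_mono:
  "0 < k \<Longrightarrow> 0 \<le> x \<Longrightarrow> x \<le> y \<Longrightarrow> adj_root_map E k x \<le> adj_root_map E k y"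
  by (simp add: adj_root_map_def less_eq_vec_def adj_form_mono)

lemma adj_root_map_scaleR:
  assumes "0 < k" "0 \<le> c"
  shows "adj_root_map E k (c *\<^sub>R x) = c *\<^sub>R adj_root_map E k x"
proof -
  have "($) (c *\<^sub>R x) = (\<lambda>j. c * x $ j)"
    by (simp add: fun_eq_iff)
  then have "root k (adj_form E k (($) (c *\<^sub>R x)) i) = c * root k (adj_form E k (($) x) i)" for i
    using assms by (simp add: adj_form_scale real_root_mult real_root_power_cancel)
  then show ?thesis
    by (simp add: adj_root_map_def vec_eq_iff)
qed

lemma tensor_eigenvalue_norm_le:
  fixes A :: "'v::finite tensor"
  assumes "tensor_eigenvalue A m \<mu>" and A_le: "\<And>i is. cmod (A i is) \<le> B"
  shows "cmod \<mu> \<le> B * card {is::'v list. length is = m - 1}"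
proof -
  obtain x where "x \<noteq> (\<lambda>_. 0)" and eq: "\<And>i. tensor_apply A m x i = \<mu> * x i ^ (m - 1)"
    using assms(1) unfolding tensor_eigenvalue_def by blast
  define M where "M = Max (range (\<lambda>i. cmod (x i)))"
  have x_le: "cmod (x i) \<le> M" for i
    unfolding M_def by (rule Max_ge) auto
  have "M \<in> range (\<lambda>i. cmod (x i))"
    unfolding M_def by (rule Max_in) auto
  then obtain j where j: "M = cmod (x j)"
    by blast
  obtain i where "x i \<noteq> 0"
    using \<open>x \<noteq> (\<lambda>_. 0)\<close> by auto
  then have "0 < cmod (x i)"
    by simp
  then have "0 < M"
    using x_le[of i] by linarith
  have prod_le: "cmod (\<Prod>j\<leftarrow>is. x j) \<le> M ^ length is" for "is"
  proof (induction "is")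
    case (Cons a as)
    then show ?case
      using x_le[of a] \<open>0 < M\<close> by (auto simp: norm_mult intro!: mult_mono)
  qed simp
  have "cmod \<mu> * M ^ (m - 1) = cmod (tensor_apply A m x j)"
    by (simp add: eq j norm_mult norm_power)
  also have "\<dots> \<le> (\<Sum>is | length is = m - 1. cmod (A j is) * cmod (\<Prod>j\<leftarrow>is. x j))"
    unfolding tensor_apply_def by (rule order_trans[OF norm_sum]) (simp add: norm_mult)
  also have "\<dots> \<le> (\<Sum>is::'v list | length is = m - 1. B * M ^ (m - 1))"
  proof (rule sum_mono)
    fix "is" :: "'v list" assume "is \<in> {is. length is = m - 1}"
    then show "cmod (A j is) * cmod (\<Prod>j\<leftarrow>is. x j) \<le> B * M ^ (m - 1)"
      using A_le[of j "is"] prod_le[of "is"] by (auto intro: mult_mono order_trans[OF norm_ge_zero])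
  qed
  finally show ?thesis
    using \<open>0 < M\<close> by (simp add: mult.commute)
qed

lemma tensor_eigenvalue_le_rho_k:
  fixes E :: "'v::finite \<Rightarrow> 'v \<Rightarrow> bool"
  assumes "tensor_eigenvalue (k_adj_tensor E k) (Suc k) \<mu>"
  shows "cmod \<mu> \<le> rho_k E k"
proof -
  have "cmod (k_adj_tensor E k i is) \<le> 1" for i "is"
    by (simp add: k_adj_tensor_def norm_divide)
  then have "cmod \<nu> \<le> card {is::'v list. length is = k}"
    if "tensor_eigenvalue (k_adj_tensor E k) (Suc k) \<nu>" for \<nu>
    using tensor_eigenvalue_norm_le[OF that] by fastforce
  then have "bdd_above {cmod \<mu> | \<mu>. tensor_eigenvalue (k_adj_tensor E k) (Suc k) \<mu>}"
    by (auto intro!: bdd_aboveI)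
  then show ?thesis
    using assms by (auto simp: rho_k_def tensor_spectral_radius_def intro: cSup_upper)
qed

lemma tensor_eigenvalue_of_adj_root_map:
  fixes E :: "'v::finite \<Rightarrow> 'v \<Rightarrow> bool"
  assumes "simple_graph E" "0 < k" and x: "0 \<le> x" "x \<noteq> 0" and "0 \<le> s"
    and eigen: "adj_root_map E k x = s *\<^sub>R x"
  shows "tensor_eigenvalue (k_adj_tensor E k) (Suc k) (of_real (s ^ k))"
proof -
  define y where "y = (\<lambda>j. complex_of_real (x $ j))"
  have "adj_form E k (($) x) i = (s * x $ i) ^ k" for i
  proof -
    have "root k (adj_form E k (($) x) i) = s * x $ i"
      using arg_cong[OF eigen, of "\<lambda>v. v $ i"] by (simp add: adj_root_map_def)
    moreover have "0 \<le> adj_form E k (($) x) i"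
      using x(1) by (intro adj_form_nonneg) (simp add: less_eq_vec_def)
    ultimately show ?thesis
      using \<open>0 < k\<close> by (metis real_root_pow_pos2)
  qed
  then have "tensor_apply (k_adj_tensor E k) (Suc k) y i = of_real (s ^ k) * y i ^ (Suc k - 1)" for i
    using assms(1) by (simp add: tensor_apply_k_adj_tensor y_def adj_form_of_real power_mult_distrib)
  moreover have "y \<noteq> (\<lambda>_. 0)"
    using x(2) by (auto simp: y_def vec_eq_iff fun_eq_iff)
  ultimately show ?thesis
    unfolding tensor_eigenvalue_def by blast
qed

lemma has_k_core_imp_eigenvalue_ge_1:
  fixes E :: "'v::finite \<Rightarrow> 'v \<Rightarrow> bool"
  assumes "simple_graph E" "0 < k" "has_k_core E k"
  obtains \<mu> where "tensor_eigenvalue (k_adj_tensor E k) (Suc k) \<mu>" "1 \<le> cmod \<mu>"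
proof -
  obtain S where "S \<noteq> {}" and core: "\<And>v. v \<in> S \<Longrightarrow> k \<le> card {u\<in>S. E v u}"
    using assms(3) unfolding has_k_core_def by blast
  define u :: "real^'v" where "u = (\<chi> i. if i \<in> S then 1 else 0)"
  have u: "0 \<le> u" "u \<noteq> 0"
    using \<open>S \<noteq> {}\<close> by (auto simp: u_def less_eq_vec_def vec_eq_iff)
  have u_sub: "u \<le> adj_root_map E k u"
  proof -
    have "1 \<le> root k (adj_form E k (($) u) i)" if iS: "i \<in> S" for i
    proof -
      obtain B where B: "B \<subseteq> {w\<in>S. E i w}" "card B = k"
        using obtain_subset_with_card_n[OF core[OF iS]] by blast
      then have "1 \<le> adj_form E k (($) u) i"
        by (intro adj_form_ge_1[where B = B]) (auto simp: u_def nbhd_def)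
      then show ?thesis
        using \<open>0 < k\<close> by simp
    qed
    moreover have "0 \<le> adj_root_map E k u"
      using \<open>0 \<le> u\<close> by (rule adj_root_map_nonneg)
    ultimately show ?thesis
      by (auto simp: less_eq_vec_def u_def adj_root_map_def)
  qed
  obtain x s where x: "0 \<le> x" "x \<noteq> 0" and "1 \<le> s" and eigen: "adj_root_map E k x = s *\<^sub>R x"
    by (rule nonneg_eigenvector_of_subinvariant[of "adj_root_map E k" u])
      (simp_all add: u u_sub continuous_on_adj_root_map adj_root_map_nonneg
        adj_root_map_mono[OF \<open>0 < k\<close>] adj_root_map_scaleR[OF \<open>0 < k\<close>])
  have "tensor_eigenvalue (k_adj_tensor E k) (Suc k) (of_real (s ^ k))"
    using \<open>1 \<le> s\<close> by (intro tensor_eigenvalue_of_adj_root_map[OF assms(1,2) x _ eigen]) simp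
  moreover have "1 \<le> cmod (of_real (s ^ k))"
    using \<open>1 \<le> s\<close> by (auto simp: norm_power intro!: one_le_power)
  ultimately show ?thesis
    using that by blast
qed

lemma tensor_eigenvalue_eq_0_if_not_has_k_core:
  fixes E :: "'v::finite \<Rightarrow> 'v \<Rightarrow> bool"
  assumes "simple_graph E" "\<not> has_k_core E k" "tensor_eigenvalue (k_adj_tensor E k) (Suc k) \<mu>"
  shows "\<mu> = 0"
proof -
  obtain x where "x \<noteq> (\<lambda>_. 0)"
    and eq: "\<And>i. tensor_apply (k_adj_tensor E k) (Suc k) x i = \<mu> * x i ^ k"
    using assms(3) unfolding tensor_eigenvalue_def by auto
  define U where "U = {i. x i \<noteq> 0}"
  have "U \<noteq> {}"
    using \<open>x \<noteq> (\<lambda>_. 0)\<close> by (auto simp: U_def)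
  with assms(2) obtain j where "j \<in> U" "card {u\<in>U. E j u} < k"
    unfolding has_k_core_def by (auto simp: not_le)
  then have "\<mu> * x j ^ k = 0"
    using eq[of j] adj_form_eq_0[where x = x and i = j] tensor_apply_k_adj_tensor[OF assms(1)]
    by (simp add: U_def conj_commute)
  with \<open>j \<in> U\<close> show ?thesis
    by (simp add: U_def)
qed

(* Needed since rho_k is a supremum and Sup {} is unspecified for real. *)
lemma tensor_eigenvalue_0_if_not_has_k_core:
  fixes E :: "'v::finite \<Rightarrow> 'v \<Rightarrow> bool"
  assumes sg: "simple_graph E" and "\<not> has_k_core E k"
  shows "tensor_eigenvalue (k_adj_tensor E k) (Suc k) 0"
proof -
  obtain v where v: "card {u. E v u} < k"
    using assms(2) unfolding has_k_core_def by (auto simp: not_le dest: spec[of _ UNIV])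
  define x :: "'v \<Rightarrow> complex" where "x j = (if j = v then 1 else 0)" for j
  have "card {u. x u \<noteq> 0 \<and> E i u} < k" for i
  proof (cases "E i v")
    case True
    then have "{u. E v u} \<noteq> {}"
      using sg by (auto simp: simple_graph_def)
    then have "1 \<le> card {u. E v u}"
      by (simp add: Suc_le_eq card_gt_0_iff)
    moreover have "{u. x u \<noteq> 0 \<and> E i u} = {v}"
      using True by (auto simp: x_def)
    ultimately show ?thesis
      using v by simp
  next
    case False
    then have no_support_nbrs: "{u. x u \<noteq> 0 \<and> E i u} = {}"
      by (auto simp: x_def)
    show ?thesis
      unfolding no_support_nbrs using v by simp
  qed
  then have "tensor_apply (k_adj_tensor E k) (Suc k) x i = 0 * x i ^ (Suc k - 1)" for i
    by (simp add: tensor_apply_k_adj_tensor[OF sg] adj_form_eq_0)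
  moreover have "x \<noteq> (\<lambda>_. 0)"
    by (auto simp: x_def fun_eq_iff)
  ultimately show ?thesis
    unfolding tensor_eigenvalue_def by blast
qed

lemma rho_k_eq_0_if_not_has_k_core:
  fixes E :: "'v::finite \<Rightarrow> 'v \<Rightarrow> bool"
  assumes "simple_graph E" "\<not> has_k_core E k"
  shows "rho_k E k = 0"
proof -
  have "{cmod \<mu> | \<mu>. tensor_eigenvalue (k_adj_tensor E k) (Suc k) \<mu>} = {0}"
    using tensor_eigenvalue_eq_0_if_not_has_k_core[OF assms]
      tensor_eigenvalue_0_if_not_has_k_core[OF assms] by auto
  then show ?thesis
    by (simp add: rho_k_def tensor_spectral_radius_def)
qed

theorem theorem3p1:
  fixes E :: "'v::finite \<Rightarrow> 'v \<Rightarrow> bool" and k :: nat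
  assumes "simple_graph E" and "k \<ge> 1"
  shows "has_k_core E k \<longleftrightarrow> rho_k E k \<ge> 1"
proof
  assume "has_k_core E k"
  moreover have "0 < k"
    using assms(2) by simp
  ultimately obtain \<mu> where "tensor_eigenvalue (k_adj_tensor E k) (Suc k) \<mu>" "1 \<le> cmod \<mu>"
    using has_k_core_imp_eigenvalue_ge_1 assms(1) by blast
  then show "rho_k E k \<ge> 1"
    using tensor_eigenvalue_le_rho_k by fastforce
next
  assume "rho_k E k \<ge> 1"
  then show "has_k_core E k"
    using rho_k_eq_0_if_not_has_k_core[OF assms(1)] by fastforce
qed

end
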